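(* Let $a,b\in K$. Then: (1) The skew rational function $(T-b)^{-1}$ is defined at $a$ if and only if $b\notin\Delta(a)$ and, for every $c\in\Delta(a)$, the equation $\sigma(x)c+\delta(x)-bx=1$ has a solution $x\in K$. (2) If $(T-b)^{-1}$ is defined at $a$, then its value at $a$ is the unique solution $x\in K$ of $\sigma(x)a+\delta(x)-bx=1$.
   Context: Let $K$ be a skew field, $K^*=K\setminus\{0\}$, $\sigma\colon K\to K$ a ring endomorphism and $\delta\colon K\to K$ a $\sigma$-derivation ($\delta$ additive, $\delta(ab)=\sigma(a)\delta(b)+\delta(a)b$). $K[T;\sigma,\delta]$ is the skew polynomial ring with $Ta=\sigma(a)T+\delta(a)$. The $(\sigma,\delta)$-action of $K^*$ on $K$ is ${}^{b}a=\sigma(b)ab^{-1}+\delta(b)b^{-1}$; $\Delta(a)=\{{}^{b}a:b\in K^*\}$ is the $(\sigma,\delta)$-conjugacy class of $a$. For $P\in K[T;\sigma,\delta]$ and $a\in K$, $P(a)$ is the unique element of $K$ with $P(T)-P(a)\in K[T;\sigma,\delta](T-a)$. For a nonempty set $Z$ with a $K^*$-action, functions $Z\to K$ are added pointwise and the skew product is $(f\diamond g)(z)=f({}^{g(z)}z)g(z)$ if $g(z)\neq0$, $0$ otherwise; $f$ is skew invertible if some $g$ satisfies $f\diamond g=g\diamond f=1$, and $g=f^{\langle-1\rangle}$. For an invariant set $A\subseteq K$, $P$ gives the function $A\to K$, $c\mapsto P(c)$. $K(T;\sigma,\delta)$ is the division ring of left fractions of the left Ore domain $K[T;\sigma,\delta]$;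 each $f$ has a unique minimal representation $f=P(T)^{-1}Q(T)$ with $P$ monic of least degree. $f$ is defined at $a$ if $P\colon\Delta(a)\to K$ is skew invertible, and then $f(a)=(P^{\langle-1\rangle}\diamond Q)(a)$ with $P^{\langle-1\rangle}$ the skew inverse on $\Delta(a)$. *)

theory Defs
  imports Main
begin

definition ring_endo :: "('a::division_ring \<Rightarrow> 'a) \<Rightarrow> bool" where
  "ring_endo \<sigma> \<longleftrightarrow> (\<forall>x y. \<sigma> (x + y) = \<sigma> x + \<sigma> y) \<and> (\<forall>x y. \<sigma> (x * y) = \<sigma> x * \<sigma> y) \<and> \<sigma> 1 = 1"

definition sigma_derivation :: "('a::division_ring \<Rightarrow> 'a) \<Rightarrow> ('a \<Rightarrow> 'a) \<Rightarrow> bool" where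
  "sigma_derivation \<sigma> \<delta> \<longleftrightarrow> (\<forall>x y. \<delta> (x + y) = \<delta> x + \<delta> y) \<and>
     (\<forall>x y. \<delta> (x * y) = \<sigma> x * \<delta> y + \<delta> x * y)"

text \<open>Skew polynomials in K[T;sigma,delta]: finitely supported coefficient
sequences, p = sum of (p i) T^i with coefficients on the left.\<close>

definition is_spoly :: "(nat \<Rightarrow> 'a::zero) \<Rightarrow> bool" where
  "is_spoly p \<longleftrightarrow> finite {i. p i \<noteq> 0}"

definition spdeg :: "(nat \<Rightarrow> 'a::zero) \<Rightarrow> nat" where
  "spdeg p = (if (\<forall>i. p i = 0) then 0 else Max {i. p i \<noteq> 0})"

definition spmonic :: "(nat \<Rightarrow> 'a::{zero,one}) \<Rightarrow> bool" where
  "spmonic p \<longleftrightarrow> p (spdeg p) = 1"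

definition spconst :: "'a::zero \<Rightarrow> nat \<Rightarrow> 'a" where
  "spconst c = (\<lambda>j. if j = 0 then c else 0)"

definition spTminus :: "'a::ring_1 \<Rightarrow> nat \<Rightarrow> 'a" where
  "spTminus a = (\<lambda>j. if j = 1 then 1 else if j = 0 then - a else 0)"

text \<open>Left multiplication by T, using T c = sigma(c) T + delta(c).\<close>
definition spTmul :: "('a::division_ring \<Rightarrow> 'a) \<Rightarrow> ('a \<Rightarrow> 'a) \<Rightarrow> (nat \<Rightarrow> 'a) \<Rightarrow> nat \<Rightarrow> 'a" where
  "spTmul \<sigma> \<delta> q = (\<lambda>j. (if j = 0 then 0 else \<sigma> (q (j - 1))) + \<delta> (q j))"

definition spmul :: "('a::division_ring \<Rightarrow> 'a) \<Rightarrow> ('a \<Rightarrow> 'a) \<Rightarrow> (nat \<Rightarrow> 'a) \<Rightarrow> (nat \<Rightarrow> 'a) \<Rightarrow> nat \<Rightarrow> 'a" where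
  "spmul \<sigma> \<delta> p q = (\<lambda>j. \<Sum>i\<in>{i. p i \<noteq> 0}. p i * ((spTmul \<sigma> \<delta> ^^ i) q) j)"

definition speval :: "('a::division_ring \<Rightarrow> 'a) \<Rightarrow> ('a \<Rightarrow> 'a) \<Rightarrow> (nat \<Rightarrow> 'a) \<Rightarrow> 'a \<Rightarrow> 'a" where
  "speval \<sigma> \<delta> P a = (THE r. \<exists>Q. is_spoly Q \<and> (\<lambda>j. P j - spconst r j) = spmul \<sigma> \<delta> Q (spTminus a))"

definition sd_act :: "('a::division_ring \<Rightarrow> 'a) \<Rightarrow> ('a \<Rightarrow> 'a) \<Rightarrow> 'a \<Rightarrow> 'a \<Rightarrow> 'a" where
  "sd_act \<sigma> \<delta> b a = \<sigma> b * a * inverse b + \<delta> b * inverse b"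

definition sd_class :: "('a::division_ring \<Rightarrow> 'a) \<Rightarrow> ('a \<Rightarrow> 'a) \<Rightarrow> 'a \<Rightarrow> 'a set" where
  "sd_class \<sigma> \<delta> a = {sd_act \<sigma> \<delta> b a | b. b \<noteq> 0}"

text \<open>Skew product of functions Z -> K for Z = an invariant subset of K
(functions are represented by total functions; only values on Z matter).\<close>
definition skew_prod :: "('a::division_ring \<Rightarrow> 'a) \<Rightarrow> ('a \<Rightarrow> 'a) \<Rightarrow> ('a \<Rightarrow> 'a) \<Rightarrow> ('a \<Rightarrow> 'a) \<Rightarrow> 'a \<Rightarrow> 'a" where
  "skew_prod \<sigma> \<delta> f g z = (if g z \<noteq> 0 then f (sd_act \<sigma> \<delta> (g z) z) * g z else 0)"

definition skew_inverse_on :: "('a::division_ring \<Rightarrow> 'a) \<Rightarrow> ('a \<Rightarrow> 'a) \<Rightarrow> 'a set \<Rightarrow> ('a \<Rightarrow> 'a) \<Rightarrow> ('a \<Rightarrow> 'a) \<Rightarrow> bool" where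
  "skew_inverse_on \<sigma> \<delta> Z f g \<longleftrightarrow>
     (\<forall>z\<in>Z. skew_prod \<sigma> \<delta> f g z = 1 \<and> skew_prod \<sigma> \<delta> g f z = 1)"

definition skew_invertible_on :: "('a::division_ring \<Rightarrow> 'a) \<Rightarrow> ('a \<Rightarrow> 'a) \<Rightarrow> 'a set \<Rightarrow> ('a \<Rightarrow> 'a) \<Rightarrow> bool" where
  "skew_invertible_on \<sigma> \<delta> Z f \<longleftrightarrow> (\<exists>g. skew_inverse_on \<sigma> \<delta> Z f g)"

definition skew_inv :: "('a::division_ring \<Rightarrow> 'a) \<Rightarrow> ('a \<Rightarrow> 'a) \<Rightarrow> 'a set \<Rightarrow> ('a \<Rightarrow> 'a) \<Rightarrow> 'a \<Rightarrow> 'a" where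
  "skew_inv \<sigma> \<delta> Z f = (SOME g. skew_inverse_on \<sigma> \<delta> Z f g)"

text \<open>Skew rational functions P^{-1} Q in K(T;sigma,delta), represented by pairs
(P,Q) of skew polynomials with P nonzero.\<close>
definition frac_eq :: "('a::division_ring \<Rightarrow> 'a) \<Rightarrow> ('a \<Rightarrow> 'a) \<Rightarrow>
    (nat \<Rightarrow> 'a) \<times> (nat \<Rightarrow> 'a) \<Rightarrow> (nat \<Rightarrow> 'a) \<times> (nat \<Rightarrow> 'a) \<Rightarrow> bool" where
  "frac_eq \<sigma> \<delta> PQ PQ' \<longleftrightarrow>
     (\<exists>u v. is_spoly u \<and> is_spoly v \<and>
        spmul \<sigma> \<delta> u (fst PQ) = spmul \<sigma> \<delta> v (fst PQ') \<and>
        spmul \<sigma> \<delta> u (fst PQ) \<noteq> (\<lambda>_. 0) \<and>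
        spmul \<sigma> \<delta> u (snd PQ) = spmul \<sigma> \<delta> v (snd PQ'))"

definition min_rep :: "('a::division_ring \<Rightarrow> 'a) \<Rightarrow> ('a \<Rightarrow> 'a) \<Rightarrow>
    (nat \<Rightarrow> 'a) \<times> (nat \<Rightarrow> 'a) \<Rightarrow> (nat \<Rightarrow> 'a) \<times> (nat \<Rightarrow> 'a)" where
  "min_rep \<sigma> \<delta> PQ = (SOME R. is_spoly (fst R) \<and> is_spoly (snd R) \<and> spmonic (fst R) \<and>
      frac_eq \<sigma> \<delta> PQ R \<and>
      (\<forall>R'. is_spoly (fst R') \<and> is_spoly (snd R') \<and> spmonic (fst R') \<and> frac_eq \<sigma> \<delta> PQ R'
            \<longrightarrow> spdeg (fst R) \<le> spdeg (fst R')))"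

definition rf_defined_at :: "('a::division_ring \<Rightarrow> 'a) \<Rightarrow> ('a \<Rightarrow> 'a) \<Rightarrow>
    (nat \<Rightarrow> 'a) \<times> (nat \<Rightarrow> 'a) \<Rightarrow> 'a \<Rightarrow> bool" where
  "rf_defined_at \<sigma> \<delta> PQ a \<longleftrightarrow>
     skew_invertible_on \<sigma> \<delta> (sd_class \<sigma> \<delta> a) (speval \<sigma> \<delta> (fst (min_rep \<sigma> \<delta> PQ)))"

definition rf_value :: "('a::division_ring \<Rightarrow> 'a) \<Rightarrow> ('a \<Rightarrow> 'a) \<Rightarrow>
    (nat \<Rightarrow> 'a) \<times> (nat \<Rightarrow> 'a) \<Rightarrow> 'a \<Rightarrow> 'a" where
  "rf_value \<sigma> \<delta> PQ a =
     skew_prod \<sigma> \<delta>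
       (skew_inv \<sigma> \<delta> (sd_class \<sigma> \<delta> a) (speval \<sigma> \<delta> (fst (min_rep \<sigma> \<delta> PQ))))
       (speval \<sigma> \<delta> (snd (min_rep \<sigma> \<delta> PQ))) a"

end

theory Submission
  imports Defs
begin

text \<open>
  The fraction \<open>(T - b)\<^sup>-\<^sup>1\<close> is already in lowest terms: if \<open>P\<^sup>-\<^sup>1Q\<close> represents it, cancelling
  in the Ore domain gives \<open>P = Q(T - b)\<close>, so a monic \<open>P\<close> has degree at least one and equals
  \<open>T - b\<close> when the degree is one. Hence \<open>(T - b)\<^sup>-\<^sup>1\<close> is defined at \<open>a\<close> iff \<open>c \<mapsto> c - b\<close> is skew
  invertible on \<open>\<Delta>(a)\<close>. Since \<open>\<^sup>xc \<cdot> x = \<sigma>(x)c + \<delta>(x)\<close>, the identity \<open>((c - b) \<diamond> g)(c) = 1\<close>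
  says precisely that \<open>g(c)\<close> solves \<open>\<sigma>(x)c + \<delta>(x) - bx = 1\<close>. Solutions at \<open>c\<close> are unique
  when \<open>b \<notin> \<Delta>(c)\<close>: the difference \<open>x\<close> of two of them satisfies \<open>\<^sup>xc = b\<close>. Uniqueness also
  makes the right inverse built from solutions a left inverse, because at \<open>\<^sup>c\<^sup>-\<^sup>bc\<close> the
  solution is \<open>(c - b)\<^sup>-\<^sup>1\<close>.
\<close>

section \<open>Skew polynomials\<close>

definition has_degree :: "(nat \<Rightarrow> 'a::zero) \<Rightarrow> nat \<Rightarrow> bool" where
  "has_degree p n \<longleftrightarrow> p n \<noteq> 0 \<and> (\<forall>j>n. p j = 0)"

lemma is_spolyI: "\<forall>i>N. p i = 0 \<Longrightarrow> is_spoly p"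
  unfolding is_spoly_def by (rule finite_subset[of _ "{..N}"]) (auto simp: not_le[symmetric])

lemma is_spolyE:
  assumes "is_spoly p"
  obtains N where "\<forall>i>N. p i = 0"
proof -
  obtain N where "\<forall>i\<in>{i. p i \<noteq> 0}. i \<le> N"
    using assms finite_nat_set_iff_bounded_le unfolding is_spoly_def by blast
  then have "\<forall>i>N. p i = 0" by (auto simp: not_le[symmetric])
  then show thesis by (rule that)
qed

lemma is_spoly_diff:
  fixes p q :: "nat \<Rightarrow> 'a::ab_group_add"
  assumes "is_spoly p" and "is_spoly q"
  shows "is_spoly (\<lambda>i. p i - q i)"
proof -
  obtain N1 where "\<forall>i>N1. p i = 0" using assms(1) by (rule is_spolyE)
  moreover obtain N2 where "\<forall>i>N2. q i = 0" using assms(2) by (rule is_spolyE)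
  ultimately have "\<forall>i>max N1 N2. p i - q i = 0" by simp
  then show ?thesis by (rule is_spolyI)
qed

lemma is_spoly_spconst: "is_spoly (spconst c)"
  by (rule is_spolyI[of 0]) (simp add: spconst_def)

lemma is_spoly_spTminus: "is_spoly (spTminus b)"
  by (rule is_spolyI[of 1]) (simp add: spTminus_def)

lemma has_degree_spTminus: "has_degree (spTminus b) 1"
  by (simp add: has_degree_def spTminus_def)

lemma has_degree_is_spoly: "has_degree p n \<Longrightarrow> is_spoly p"
  unfolding has_degree_def by (blast intro: is_spolyI)

lemma spdeg_eqI: "has_degree p n \<Longrightarrow> spdeg p = n"
proof -
  assume p: "has_degree p n"
  then have "Max {i. p i \<noteq> 0} = n"
    using has_degree_is_spoly[OF p]
    by (intro Max_eqI) (auto simp: has_degree_def is_spoly_def not_le[symmetric])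
  moreover have "\<not> (\<forall>i. p i = 0)" using p by (auto simp: has_degree_def)
  ultimately show ?thesis by (auto simp: spdeg_def)
qed

lemma has_degree_spdeg:
  assumes "is_spoly p" and "p \<noteq> (\<lambda>_. 0)"
  shows "has_degree p (spdeg p)"
proof -
  let ?S = "{i. p i \<noteq> 0}"
  have fin: "finite ?S" using assms(1) by (simp add: is_spoly_def)
  have ne: "?S \<noteq> {}" using assms(2) by auto
  then have deg: "spdeg p = Max ?S" by (auto simp: spdeg_def)
  have "p (Max ?S) \<noteq> 0" using Max_in[OF fin ne] by blast
  moreover have "p j = 0" if "j > Max ?S" for j
    using Max_ge[OF fin, of j] that by (meson leD mem_Collect_eq)
  ultimately show ?thesis unfolding has_degree_def deg by blast
qed

lemma has_degree_0_spconst: "has_degree p 0 \<Longrightarrow> p = spconst (p 0)"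
  by (auto simp: has_degree_def spconst_def fun_eq_iff)

locale ore_extension =
  fixes \<sigma> \<delta> :: "'a::division_ring \<Rightarrow> 'a"
  assumes ring_endo: "ring_endo \<sigma>" and sigma_derivation: "sigma_derivation \<sigma> \<delta>"
begin

lemma sigma_add: "\<sigma> (x + y) = \<sigma> x + \<sigma> y"
  and sigma_mult: "\<sigma> (x * y) = \<sigma> x * \<sigma> y"
  and sigma_one: "\<sigma> 1 = 1"
  using ring_endo by (simp_all add: ring_endo_def)

lemma sigma_zero: "\<sigma> 0 = 0"
  using sigma_add[of 0 0] by simp

lemma sigma_diff: "\<sigma> (x - y) = \<sigma> x - \<sigma> y"
  using sigma_add[of "x - y" y] by (simp add: eq_diff_eq)

lemma sigma_nonzero: "x \<noteq> 0 \<Longrightarrow> \<sigma> x \<noteq> 0"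
  using sigma_mult[of x "inverse x"] sigma_one by auto

lemma sigma_pow_nonzero: "x \<noteq> 0 \<Longrightarrow> (\<sigma> ^^ n) x \<noteq> 0"
  by (induction n) (auto simp: sigma_nonzero)

lemma delta_add: "\<delta> (x + y) = \<delta> x + \<delta> y"
  and delta_mult: "\<delta> (x * y) = \<sigma> x * \<delta> y + \<delta> x * y"
  using sigma_derivation by (simp_all add: sigma_derivation_def)

lemma delta_zero: "\<delta> 0 = 0"
  using delta_add[of 0 0] by simp

lemma delta_diff: "\<delta> (x - y) = \<delta> x - \<delta> y"
  using delta_add[of "x - y" y] by (simp add: eq_diff_eq)

lemma delta_one: "\<delta> 1 = 0"
  using delta_mult[of 1 1] sigma_one by simp

abbreviation Tmul :: "(nat \<Rightarrow> 'a) \<Rightarrow> nat \<Rightarrow> 'a" where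
  "Tmul \<equiv> spTmul \<sigma> \<delta>"

abbreviation spmul_infix :: "(nat \<Rightarrow> 'a) \<Rightarrow> (nat \<Rightarrow> 'a) \<Rightarrow> nat \<Rightarrow> 'a" (infixl "\<star>" 70) where
  "p \<star> q \<equiv> spmul \<sigma> \<delta> p q"

lemma Tmul_add: "Tmul (\<lambda>j. p j + q j) = (\<lambda>j. Tmul p j + Tmul q j)"
  by (auto simp: spTmul_def sigma_add delta_add fun_eq_iff algebra_simps)

lemma Tmul_zero: "Tmul (\<lambda>_. 0) = (\<lambda>_. 0)"
  by (auto simp: spTmul_def sigma_zero delta_zero fun_eq_iff)

lemma Tmul_diff: "Tmul (\<lambda>j. p j - q j) = (\<lambda>j. Tmul p j - Tmul q j)"
  by (auto simp: spTmul_def sigma_diff delta_diff fun_eq_iff algebra_simps)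

lemma Tmul_scale: "Tmul (\<lambda>j. c * q j) = (\<lambda>j. \<sigma> c * Tmul q j + \<delta> c * q j)"
  by (auto simp: spTmul_def sigma_mult delta_mult fun_eq_iff algebra_simps sigma_zero delta_zero)

lemma Tmul_sum: "finite I \<Longrightarrow> Tmul (\<lambda>j. \<Sum>i\<in>I. f i j) = (\<lambda>j. \<Sum>i\<in>I. Tmul (f i) j)"
  by (induction I rule: finite_induct) (simp_all add: Tmul_zero Tmul_add)

lemma Tmul_pow_zero: "(Tmul ^^ n) (\<lambda>_. 0) = (\<lambda>_. 0)"
  by (induction n) (simp_all add: Tmul_zero)

lemma Tmul_pow_diff: "(Tmul ^^ n) (\<lambda>j. p j - q j) = (\<lambda>j. (Tmul ^^ n) p j - (Tmul ^^ n) q j)"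
  by (induction n) (simp_all add: Tmul_diff)

lemma Tmul_pow_spconst_1: "(Tmul ^^ i) (spconst 1) = (\<lambda>j. if j = i then 1 else 0)"
  by (induction i) (auto simp: fun_eq_iff spconst_def spTmul_def sigma_one sigma_zero delta_one delta_zero)

lemma Tmul_pow_degree:
  assumes "\<forall>j>m. q j = 0"
  shows "(\<forall>j>m+i. (Tmul ^^ i) q j = 0) \<and> (Tmul ^^ i) q (m+i) = (\<sigma> ^^ i) (q m)"
proof (induction i)
  case 0
  then show ?case using assms by simp
next
  case (Suc i)
  define R where "R = (Tmul ^^ i) q"
  have "\<forall>j>m+i. R j = 0" and "R (m+i) = (\<sigma> ^^ i) (q m)"
    using Suc by (simp_all add: R_def)
  then have "(\<forall>j>m + Suc i. Tmul R j = 0) \<and> Tmul R (m + Suc i) = (\<sigma> ^^ Suc i) (q m)"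
    by (auto simp: spTmul_def sigma_zero delta_zero)
  then show ?case by (simp add: R_def)
qed

lemma is_spoly_Tmul_pow: "is_spoly q \<Longrightarrow> is_spoly ((Tmul ^^ i) q)"
proof -
  assume "is_spoly q"
  then obtain m where "\<forall>j>m. q j = 0" by (rule is_spolyE)
  then show ?thesis using Tmul_pow_degree by (blast intro: is_spolyI)
qed

lemma spmul_eq_sum:
  assumes "\<forall>i>N. p i = 0"
  shows "p \<star> q = (\<lambda>j. \<Sum>i\<le>N. p i * (Tmul ^^ i) q j)"
  unfolding spmul_def
proof (rule ext, rule sum.mono_neutral_left)
  show "{i. p i \<noteq> 0} \<subseteq> {..N}" using assms by (auto simp: not_le[symmetric])
qed auto

lemma spmul_zero_left: "(\<lambda>_. 0) \<star> q = (\<lambda>_. 0)"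
  by (simp add: spmul_def)

lemma spmul_zero_right: "is_spoly p \<Longrightarrow> p \<star> (\<lambda>_. 0) = (\<lambda>_. 0)"
proof -
  assume "is_spoly p"
  then obtain N where N: "\<forall>i>N. p i = 0" by (rule is_spolyE)
  show ?thesis unfolding spmul_eq_sum[OF N] Tmul_pow_zero by simp
qed

lemma spmul_spconst_left: "spconst c \<star> q = (\<lambda>j. c * q j)"
  by (subst spmul_eq_sum[of 0]) (simp_all add: spconst_def)

lemma spmul_spconst_1_right: "is_spoly p \<Longrightarrow> p \<star> spconst 1 = p"
proof -
  assume "is_spoly p"
  then obtain N where N: "\<forall>i>N. p i = 0" by (rule is_spolyE)
  have "(\<Sum>i\<le>N. p i * (if j = i then 1 else 0)) = p j" for j
    using N by (cases "j \<le> N") (auto simp: if_distrib cong: if_cong)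
  then show ?thesis unfolding spmul_eq_sum[OF N] Tmul_pow_spconst_1 by simp
qed

lemma spmul_diff_right: "is_spoly p \<Longrightarrow> p \<star> (\<lambda>j. q j - r j) = (\<lambda>j. (p \<star> q) j - (p \<star> r) j)"
proof -
  assume "is_spoly p"
  then obtain N where N: "\<forall>i>N. p i = 0" by (rule is_spolyE)
  show ?thesis unfolding spmul_eq_sum[OF N] Tmul_pow_diff by (simp add: sum_subtractf right_diff_distrib)
qed

lemma spmul_diff_left:
  assumes "is_spoly p" and "is_spoly q"
  shows "(\<lambda>i. p i - q i) \<star> r = (\<lambda>j. (p \<star> r) j - (q \<star> r) j)"
proof -
  obtain N1 where "\<forall>i>N1. p i = 0" using assms(1) by (rule is_spolyE)
  moreover obtain N2 where "\<forall>i>N2. q i = 0" using assms(2) by (rule is_spolyE)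
  ultimately have p: "\<forall>i>max N1 N2. p i = 0" and q: "\<forall>i>max N1 N2. q i = 0"
    and pq: "\<forall>i>max N1 N2. p i - q i = 0" by auto
  show ?thesis unfolding spmul_eq_sum[OF p] spmul_eq_sum[OF q] spmul_eq_sum[OF pq]
    by (simp add: sum_subtractf left_diff_distrib)
qed

lemma spmul_scale_left:
  assumes "is_spoly p"
  shows "(\<lambda>i. c * p i) \<star> r = (\<lambda>j. c * (p \<star> r) j)"
proof -
  obtain N where N: "\<forall>i>N. p i = 0" using assms by (rule is_spolyE)
  then have cN: "\<forall>i>N. c * p i = 0" by simp
  show ?thesis unfolding spmul_eq_sum[OF N] spmul_eq_sum[OF cN]
    by (simp add: sum_distrib_left mult.assoc)
qed

lemma spmul_degree:
  assumes p: "\<forall>i>n. p i = 0" and q: "\<forall>j>m. q j = 0"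
  shows "(\<forall>j>n+m. (p \<star> q) j = 0) \<and> (p \<star> q) (n+m) = p n * (\<sigma> ^^ n) (q m)"
proof -
  have vanish: "(Tmul ^^ i) q j = 0" if "j > m + i" for i j
    using Tmul_pow_degree[OF q] that by blast
  have top: "(Tmul ^^ n) q (n+m) = (\<sigma> ^^ n) (q m)"
    using Tmul_pow_degree[OF q, of n] by (simp add: add.commute)
  have "(p \<star> q) j = 0" if "j > n + m" for j
    unfolding spmul_eq_sum[OF p] using that by (intro sum.neutral) (auto intro!: vanish)
  moreover have "(p \<star> q) (n+m) = (\<Sum>i<n. p i * (Tmul ^^ i) q (n+m)) + p n * (Tmul ^^ n) q (n+m)"
    unfolding spmul_eq_sum[OF p] by (simp add: lessThan_Suc_atMost[symmetric])
  moreover have "(\<Sum>i<n. p i * (Tmul ^^ i) q (n+m)) = 0"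
    by (rule sum.neutral) (auto simp: vanish)
  ultimately show ?thesis using top by simp
qed

lemma has_degree_spmul: "has_degree p n \<Longrightarrow> has_degree q m \<Longrightarrow> has_degree (p \<star> q) (n+m)"
  using spmul_degree[of n p m q] sigma_pow_nonzero unfolding has_degree_def by auto

lemma is_spoly_spmul: "is_spoly p \<Longrightarrow> is_spoly q \<Longrightarrow> is_spoly (p \<star> q)"
proof -
  assume p: "is_spoly p" and q: "is_spoly q"
  obtain n where "\<forall>i>n. p i = 0" using p by (rule is_spolyE)
  moreover obtain m where "\<forall>j>m. q j = 0" using q by (rule is_spolyE)
  ultimately show ?thesis using spmul_degree by (blast intro: is_spolyI)
qed

lemma spmul_left_cancel:
  assumes v: "is_spoly v" "v \<noteq> (\<lambda>_. 0)" and X: "is_spoly X" and Y: "is_spoly Y"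
    and eq: "v \<star> X = v \<star> Y"
  shows "X = Y"
proof (rule ccontr)
  let ?D = "\<lambda>j. X j - Y j"
  assume "X \<noteq> Y"
  then have "?D \<noteq> (\<lambda>_. 0)" by (auto simp: fun_eq_iff)
  then have "has_degree (v \<star> ?D) (spdeg v + spdeg ?D)"
    using v is_spoly_diff[OF X Y] by (blast intro: has_degree_spmul has_degree_spdeg)
  moreover have "v \<star> ?D = (\<lambda>_. 0)" using eq by (simp add: spmul_diff_right[OF v(1)])
  ultimately show False by (simp add: has_degree_def)
qed

text \<open>The product expands its left factor, so associativity reduces to commuting with \<open>T\<close>.\<close>

lemma spmul_Tmul:
  assumes N: "\<forall>i>N. s i = 0"
  shows "Tmul s \<star> r = Tmul (s \<star> r)"
proof (rule ext)
  fix k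
  define A where "A j = (if j = 0 then 0 else \<sigma> (s (j - 1)))" for j
  define X where "X j = (Tmul ^^ j) r k" for j
  have Ts: "\<forall>i>Suc N. Tmul s i = 0" using N by (auto simp: spTmul_def delta_zero sigma_zero)
  have Ts_eq: "Tmul s j = A j + \<delta> (s j)" for j by (simp add: spTmul_def A_def)
  have shift: "(\<Sum>j\<le>Suc N. A j * X j) = (\<Sum>i\<le>N. \<sigma> (s i) * X (Suc i))"
    unfolding sum.atMost_Suc_shift by (simp add: A_def)
  have drop: "(\<Sum>j\<le>Suc N. \<delta> (s j) * X j) = (\<Sum>i\<le>N. \<delta> (s i) * X i)"
    unfolding sum.atMost_Suc using N by (simp add: delta_zero)
  have "(Tmul s \<star> r) k = (\<Sum>j\<le>Suc N. A j * X j) + (\<Sum>j\<le>Suc N. \<delta> (s j) * X j)"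
    unfolding spmul_eq_sum[OF Ts] X_def Ts_eq
    by (simp add: distrib_right sum.distrib)
  also have "\<dots> = (\<Sum>i\<le>N. \<sigma> (s i) * X (Suc i)) + (\<Sum>i\<le>N. \<delta> (s i) * X i)"
    unfolding shift drop ..
  also have "\<dots> = (\<Sum>i\<le>N. Tmul (\<lambda>k. s i * (Tmul ^^ i) r k) k)"
    unfolding Tmul_scale X_def by (simp add: sum.distrib)
  also have "\<dots> = Tmul (s \<star> r) k"
    unfolding spmul_eq_sum[OF N] Tmul_sum[OF finite_atMost] ..
  finally show "(Tmul s \<star> r) k = Tmul (s \<star> r) k" .
qed

lemma spmul_Tmul_pow: "is_spoly s \<Longrightarrow> (Tmul ^^ i) s \<star> r = (Tmul ^^ i) (s \<star> r)"
proof (induction i)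
  case (Suc i)
  then have "is_spoly ((Tmul ^^ i) s)" by (simp add: is_spoly_Tmul_pow)
  then obtain N where "\<forall>j>N. (Tmul ^^ i) s j = 0" by (rule is_spolyE)
  with Suc show ?case by (simp add: spmul_Tmul)
qed simp

lemma spmul_sum_left:
  assumes "finite I" and "\<forall>i\<in>I. \<forall>l>N. f i l = 0"
  shows "(\<lambda>l. \<Sum>i\<in>I. f i l) \<star> r = (\<lambda>k. \<Sum>i\<in>I. (f i \<star> r) k)"
proof (rule ext)
  fix k
  have sum_N: "\<forall>l>N. (\<Sum>i\<in>I. f i l) = 0" using assms(2) by simp
  have "((\<lambda>l. \<Sum>i\<in>I. f i l) \<star> r) k = (\<Sum>l\<le>N. \<Sum>i\<in>I. f i l * (Tmul ^^ l) r k)"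
    unfolding spmul_eq_sum[OF sum_N] by (simp add: sum_distrib_right)
  also have "\<dots> = (\<Sum>i\<in>I. \<Sum>l\<le>N. f i l * (Tmul ^^ l) r k)"
    by (rule sum.swap)
  also have "\<dots> = (\<Sum>i\<in>I. (f i \<star> r) k)"
  proof (rule sum.cong)
    fix i assume "i \<in> I"
    with assms(2) have fi: "\<forall>l>N. f i l = 0" by blast
    show "(\<Sum>l\<le>N. f i l * (Tmul ^^ l) r k) = (f i \<star> r) k"
      unfolding spmul_eq_sum[OF fi] by simp
  qed simp
  finally show "((\<lambda>l. \<Sum>i\<in>I. f i l) \<star> r) k = (\<Sum>i\<in>I. (f i \<star> r) k)" .
qed

lemma spmul_assoc:
  assumes v: "is_spoly v" and q: "is_spoly q"
  shows "v \<star> q \<star> r = v \<star> (q \<star> r)"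
proof -
  obtain N where N: "\<forall>i>N. v i = 0" using v by (rule is_spolyE)
  obtain m where m: "\<forall>j>m. q j = 0" using q by (rule is_spolyE)
  have "\<forall>i\<in>{..N}. \<forall>l>m+N. v i * (Tmul ^^ i) q l = 0"
    using Tmul_pow_degree[OF m] by fastforce
  then have "v \<star> q \<star> r = (\<lambda>k. \<Sum>i\<le>N. ((\<lambda>l. v i * (Tmul ^^ i) q l) \<star> r) k)"
    unfolding spmul_eq_sum[OF N] by (rule spmul_sum_left[OF finite_atMost])
  also have "\<dots> = v \<star> (q \<star> r)"
    unfolding spmul_scale_left[OF is_spoly_Tmul_pow[OF q]] spmul_Tmul_pow[OF q] spmul_eq_sum[OF N] ..
  finally show ?thesis .
qed

section \<open>The fraction \<open>(T - b)\<^sup>-\<^sup>1\<close> and evaluation\<close>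

lemma frac_eq_inverse_Tminus:
  assumes P: "is_spoly P" and Q: "is_spoly Q"
    and "frac_eq \<sigma> \<delta> (spTminus b, spconst 1) (P, Q)"
  shows "P = Q \<star> spTminus b" and "Q \<noteq> (\<lambda>_. 0)"
proof -
  obtain u v where u: "is_spoly u" and v: "is_spoly v" and uP: "u \<star> spTminus b = v \<star> P"
    and nz: "u \<star> spTminus b \<noteq> (\<lambda>_. 0)" and uQ: "u \<star> spconst 1 = v \<star> Q"
    using assms(3) by (auto simp: frac_eq_def)
  have u_eq: "u = v \<star> Q" using uQ spmul_spconst_1_right[OF u] by simp
  have "v \<noteq> (\<lambda>_. 0)" using nz uP spmul_zero_left by metis
  moreover have "v \<star> P = v \<star> (Q \<star> spTminus b)" using uP u_eq spmul_assoc[OF v Q] by simp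
  ultimately show "P = Q \<star> spTminus b"
    using spmul_left_cancel v P is_spoly_spmul[OF Q is_spoly_spTminus] by blast
  show "Q \<noteq> (\<lambda>_. 0)" using nz u_eq spmul_zero_right[OF v] spmul_zero_left by metis
qed

lemma spdeg_frac_eq_inverse_Tminus:
  assumes "is_spoly P" and Q: "is_spoly Q" and "frac_eq \<sigma> \<delta> (spTminus b, spconst 1) (P, Q)"
  shows "spdeg P = Suc (spdeg Q)"
proof -
  have PQ: "P = Q \<star> spTminus b" and "Q \<noteq> (\<lambda>_. 0)"
    using frac_eq_inverse_Tminus assms by blast+
  with Q have "has_degree Q (spdeg Q)" by (blast intro: has_degree_spdeg)
  then have "has_degree P (spdeg Q + 1)"
    unfolding PQ by (rule has_degree_spmul[OF _ has_degree_spTminus])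
  then show ?thesis using spdeg_eqI by simp
qed

lemma monic_frac_eq_inverse_Tminus:
  assumes P: "is_spoly P" and Q: "is_spoly Q" and frac: "frac_eq \<sigma> \<delta> (spTminus b, spconst 1) (P, Q)"
    and "spmonic P" and "spdeg P = 1"
  shows "P = spTminus b" and "Q = spconst 1"
proof -
  have "Q \<noteq> (\<lambda>_. 0)" and PQ: "P = Q \<star> spTminus b"
    using frac_eq_inverse_Tminus[OF P Q frac] by blast+
  moreover have "spdeg Q = 0" using spdeg_frac_eq_inverse_Tminus[OF P Q frac] \<open>spdeg P = 1\<close> by simp
  ultimately have "has_degree Q 0" using has_degree_spdeg[OF Q] by simp
  define c where "c = Q 0"
  have Q_eq: "Q = spconst c" unfolding c_def by (rule has_degree_0_spconst) fact
  have P_eq: "P = (\<lambda>j. c * spTminus b j)"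
    using PQ unfolding Q_eq spmul_spconst_left .
  have "P 1 = 1" using \<open>spmonic P\<close> \<open>spdeg P = 1\<close> by (simp add: spmonic_def)
  then have "c = 1" by (simp add: P_eq spTminus_def)
  then show "P = spTminus b" and "Q = spconst 1" by (simp_all add: P_eq Q_eq fun_eq_iff)
qed

lemma min_rep_inverse_Tminus: "min_rep \<sigma> \<delta> (spTminus b, spconst 1) = (spTminus b, spconst 1)"
proof -
  define rep where "rep R \<longleftrightarrow> is_spoly (fst R) \<and> is_spoly (snd R) \<and> spmonic (fst R) \<and>
      frac_eq \<sigma> \<delta> (spTminus b, spconst 1) R" for R
  have spdeg_Tminus: "spdeg (spTminus b) = 1" by (rule spdeg_eqI[OF has_degree_spTminus])
  have "spmonic (spTminus b)" unfolding spmonic_def spdeg_Tminus by (simp add: spTminus_def)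
  moreover have "spconst 1 \<star> spTminus b \<noteq> (\<lambda>_. 0)"
    unfolding spmul_spconst_left by (auto simp: fun_eq_iff spTminus_def)
  ultimately have rep_Tminus: "rep (spTminus b, spconst 1)"
    unfolding rep_def frac_eq_def fst_conv snd_conv
    using is_spoly_spconst is_spoly_spTminus by blast
  have "1 \<le> spdeg P" if "rep (P, Q)" for P Q
    using spdeg_frac_eq_inverse_Tminus[of P Q b] that by (simp add: rep_def)
  then have "\<forall>R'. rep R' \<longrightarrow> spdeg (spTminus b) \<le> spdeg (fst R')"
    unfolding spdeg_Tminus by (metis prod.collapse)
  with rep_Tminus have ex: "\<exists>R. rep R \<and> (\<forall>R'. rep R' \<longrightarrow> spdeg (fst R) \<le> spdeg (fst R'))"
    by (intro exI[of _ "(spTminus b, spconst 1)"]) simp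
  have "min_rep \<sigma> \<delta> (spTminus b, spconst 1)
      = (SOME R. rep R \<and> (\<forall>R'. rep R' \<longrightarrow> spdeg (fst R) \<le> spdeg (fst R')))"
    unfolding min_rep_def rep_def by (simp only: conj_assoc)
  then have "rep (min_rep \<sigma> \<delta> (spTminus b, spconst 1)) \<and>
      (\<forall>R'. rep R' \<longrightarrow> spdeg (fst (min_rep \<sigma> \<delta> (spTminus b, spconst 1))) \<le> spdeg (fst R'))"
    using someI_ex[OF ex] by simp
  moreover obtain P Q where PQ: "min_rep \<sigma> \<delta> (spTminus b, spconst 1) = (P, Q)"
    by (rule prod.exhaust)
  ultimately have rep_PQ: "rep (P, Q)" and "spdeg P \<le> spdeg (spTminus b)"
    using rep_Tminus by auto
  with \<open>\<And>P Q. rep (P, Q) \<Longrightarrow> 1 \<le> spdeg P\<close> have "spdeg P = 1" unfolding spdeg_Tminus by fastforce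
  with rep_PQ have "P = spTminus b" and "Q = spconst 1"
    using monic_frac_eq_inverse_Tminus[of P Q] by (auto simp: rep_def)
  then show ?thesis using PQ by simp
qed

lemma speval_eqI:
  assumes Q: "is_spoly Q" and P: "(\<lambda>j. P j - spconst r j) = Q \<star> spTminus c"
  shows "speval \<sigma> \<delta> P c = r"
  unfolding speval_def
proof (rule the_equality)
  show "\<exists>Q. is_spoly Q \<and> (\<lambda>j. P j - spconst r j) = Q \<star> spTminus c" using assms by blast
  fix r' assume "\<exists>Q'. is_spoly Q' \<and> (\<lambda>j. P j - spconst r' j) = Q' \<star> spTminus c"
  then obtain Q' where Q': "is_spoly Q'" and P': "(\<lambda>j. P j - spconst r' j) = Q' \<star> spTminus c"
    by blast
  let ?D = "\<lambda>i. Q' i - Q i"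
  have D: "?D \<star> spTminus c = spconst (r - r')"
    unfolding spmul_diff_left[OF Q' Q] P[symmetric] P'[symmetric] by (simp add: fun_eq_iff spconst_def)
  show "r' = r"
  proof (cases "?D = (\<lambda>_. 0)")
    case True
    then show ?thesis using fun_cong[OF D, of 0] by (simp add: spmul_zero_left spconst_def)
  next
    case False
    then have "has_degree (?D \<star> spTminus c) (spdeg ?D + 1)"
      using is_spoly_diff[OF Q' Q] by (blast intro: has_degree_spmul has_degree_spdeg has_degree_spTminus)
    then show ?thesis by (simp add: D has_degree_def spconst_def)
  qed
qed

lemma speval_spTminus: "speval \<sigma> \<delta> (spTminus b) c = c - b"
  by (rule speval_eqI[OF is_spoly_spconst[of 1]], unfold spmul_spconst_left)
    (auto simp: spTminus_def spconst_def fun_eq_iff)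

lemma speval_spconst: "speval \<sigma> \<delta> (spconst r) c = r"
  by (rule speval_eqI[of "\<lambda>_. 0"]) (simp_all add: is_spolyI spmul_zero_left)

section \<open>Skew invertibility of \<open>c \<mapsto> c - b\<close> on \<open>\<Delta>(a)\<close>\<close>

lemma sd_act_mult: "x \<noteq> 0 \<Longrightarrow> sd_act \<sigma> \<delta> x z * x = \<sigma> x * z + \<delta> x"
  by (simp add: sd_act_def distrib_right mult.assoc)

lemma sd_act_one: "sd_act \<sigma> \<delta> 1 z = z"
  by (simp add: sd_act_def sigma_one delta_one)

lemma sd_act_sd_act:
  assumes x: "x \<noteq> 0" and y: "y \<noteq> 0"
  shows "sd_act \<sigma> \<delta> y (sd_act \<sigma> \<delta> x z) = sd_act \<sigma> \<delta> (y * x) z"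
proof -
  have yx: "y * x \<noteq> 0" using x y by simp
  have "sd_act \<sigma> \<delta> y (sd_act \<sigma> \<delta> x z) * (y * x) = (\<sigma> y * sd_act \<sigma> \<delta> x z + \<delta> y) * x"
    using sd_act_mult[OF y] by (simp add: mult.assoc[symmetric])
  also have "\<dots> = \<sigma> y * (\<sigma> x * z + \<delta> x) + \<delta> y * x"
    using sd_act_mult[OF x] by (simp add: distrib_right mult.assoc)
  also have "\<dots> = sd_act \<sigma> \<delta> (y * x) z * (y * x)"
    using sd_act_mult[OF yx] by (simp add: sigma_mult delta_mult distrib_left mult.assoc add.assoc)
  finally show ?thesis using yx by simp
qed

lemma sd_class_refl: "a \<in> sd_class \<sigma> \<delta> a"
  unfolding sd_class_def mem_Collect_eq by (intro exI[of _ 1] conjI) (simp_all add: sd_act_one)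

lemma sd_act_in_sd_class:
  assumes "w \<in> sd_class \<sigma> \<delta> a" and y: "y \<noteq> 0"
  shows "sd_act \<sigma> \<delta> y w \<in> sd_class \<sigma> \<delta> a"
proof -
  obtain x where x: "x \<noteq> 0" and w: "w = sd_act \<sigma> \<delta> x a"
    using assms(1) by (auto simp: sd_class_def)
  then have "sd_act \<sigma> \<delta> y w = sd_act \<sigma> \<delta> (y * x) a" using sd_act_sd_act y by simp
  moreover have "y * x \<noteq> 0" using x y by simp
  ultimately show ?thesis by (auto simp: sd_class_def)
qed

lemma sd_class_subset: "w \<in> sd_class \<sigma> \<delta> a \<Longrightarrow> sd_class \<sigma> \<delta> w \<subseteq> sd_class \<sigma> \<delta> a"
  by (auto simp: sd_class_def[of _ _ w] intro: sd_act_in_sd_class)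

lemma solution_unique:
  assumes b: "b \<notin> sd_class \<sigma> \<delta> w"
    and x: "\<sigma> x * w + \<delta> x - b * x = 1" and y: "\<sigma> y * w + \<delta> y - b * y = 1"
  shows "x = y"
proof (rule ccontr)
  assume "x \<noteq> y"
  then have nz: "x - y \<noteq> 0" by simp
  have "\<sigma> (x - y) * w + \<delta> (x - y) = b * (x - y)"
    using x y by (simp add: sigma_diff delta_diff algebra_simps)
  then have "sd_act \<sigma> \<delta> (x - y) w = b" using sd_act_mult[OF nz] nz by (metis mult_right_cancel)
  then show False using b nz unfolding sd_class_def by blast
qed

lemma skew_prod_Tminus_eq_one_iff:
  "skew_prod \<sigma> \<delta> (\<lambda>c. c - b) g z = 1 \<longleftrightarrow> \<sigma> (g z) * z + \<delta> (g z) - b * g z = 1"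
  by (cases "g z = 0") (simp_all add: skew_prod_def sigma_zero delta_zero sd_act_mult left_diff_distrib)

lemma skew_prod_solutions_Tminus:
  assumes b: "b \<notin> sd_class \<sigma> \<delta> a" and z: "z \<in> sd_class \<sigma> \<delta> a"
    and g: "\<forall>c\<in>sd_class \<sigma> \<delta> a. \<sigma> (g c) * c + \<delta> (g c) - b * g c = 1"
  shows "skew_prod \<sigma> \<delta> g (\<lambda>c. c - b) z = 1"
proof -
  have zb: "z - b \<noteq> 0" using z b by auto
  define w where "w = sd_act \<sigma> \<delta> (z - b) z"
  define y where "y = inverse (z - b)"
  have w: "w \<in> sd_class \<sigma> \<delta> a" unfolding w_def using sd_act_in_sd_class[OF z zb] .
  have "sd_act \<sigma> \<delta> y w = z"
    using zb sd_act_sd_act[OF zb, of y z] by (simp add: w_def y_def sd_act_one)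
  then have "skew_prod \<sigma> \<delta> (\<lambda>c. c - b) (\<lambda>_. y) w = 1"
    using zb by (simp add: skew_prod_def y_def)
  then have "\<sigma> y * w + \<delta> y - b * y = 1"
    using skew_prod_Tminus_eq_one_iff[of b "\<lambda>_. y"] by simp
  with g w have "g w = y"
    using sd_class_subset[OF w] b by (blast intro: solution_unique)
  then show ?thesis using zb by (simp add: skew_prod_def w_def y_def)
qed

lemma skew_invertible_on_Tminus_iff:
  "skew_invertible_on \<sigma> \<delta> (sd_class \<sigma> \<delta> a) (\<lambda>c. c - b) \<longleftrightarrow>
     b \<notin> sd_class \<sigma> \<delta> a \<and> (\<forall>c\<in>sd_class \<sigma> \<delta> a. \<exists>x. \<sigma> x * c + \<delta> x - b * x = 1)"
  (is "?inv \<longleftrightarrow> ?b \<and> ?sol")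
proof
  assume ?inv
  then obtain g where g: "skew_inverse_on \<sigma> \<delta> (sd_class \<sigma> \<delta> a) (\<lambda>c. c - b) g"
    unfolding skew_invertible_on_def by blast
  have "skew_prod \<sigma> \<delta> g (\<lambda>c. c - b) b = 0" by (simp add: skew_prod_def)
  then have ?b using g unfolding skew_inverse_on_def by force
  moreover have ?sol
    using g skew_prod_Tminus_eq_one_iff unfolding skew_inverse_on_def by blast
  ultimately show "?b \<and> ?sol" ..
next
  assume sol: "?b \<and> ?sol"
  define g where "g c = (SOME x. \<sigma> x * c + \<delta> x - b * x = 1)" for c
  have g: "\<forall>c\<in>sd_class \<sigma> \<delta> a. \<sigma> (g c) * c + \<delta> (g c) - b * g c = 1"
  proof
    fix c assume "c \<in> sd_class \<sigma> \<delta> a"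
    with sol obtain x where "\<sigma> x * c + \<delta> x - b * x = 1" by blast
    then show "\<sigma> (g c) * c + \<delta> (g c) - b * g c = 1" unfolding g_def by (rule someI)
  qed
  then have "skew_inverse_on \<sigma> \<delta> (sd_class \<sigma> \<delta> a) (\<lambda>c. c - b) g"
    using sol skew_prod_solutions_Tminus skew_prod_Tminus_eq_one_iff
    unfolding skew_inverse_on_def by blast
  then show ?inv unfolding skew_invertible_on_def by blast
qed

lemma skew_inv_Tminus_solution:
  assumes "skew_invertible_on \<sigma> \<delta> (sd_class \<sigma> \<delta> a) (\<lambda>c. c - b)"
  defines "x \<equiv> skew_inv \<sigma> \<delta> (sd_class \<sigma> \<delta> a) (\<lambda>c. c - b) a"
  shows "\<sigma> x * a + \<delta> x - b * x = 1"
proof -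
  have "skew_inverse_on \<sigma> \<delta> (sd_class \<sigma> \<delta> a) (\<lambda>c. c - b) (skew_inv \<sigma> \<delta> (sd_class \<sigma> \<delta> a) (\<lambda>c. c - b))"
    using assms(1) unfolding skew_invertible_on_def skew_inv_def by (rule someI_ex)
  then show ?thesis
    using sd_class_refl skew_prod_Tminus_eq_one_iff unfolding skew_inverse_on_def x_def by blast
qed

end

theorem proposition3p2:
  fixes \<sigma> \<delta> :: "'a::division_ring \<Rightarrow> 'a" and a b :: 'a
  assumes "ring_endo \<sigma>" and "sigma_derivation \<sigma> \<delta>"
  shows "(rf_defined_at \<sigma> \<delta> (spTminus b, spconst 1) a \<longleftrightarrow>
            b \<notin> sd_class \<sigma> \<delta> a \<and>
            (\<forall>c\<in>sd_class \<sigma> \<delta> a. \<exists>x. \<sigma> x * c + \<delta> x - b * x = 1))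
       \<and> (rf_defined_at \<sigma> \<delta> (spTminus b, spconst 1) a \<longrightarrow>
            (\<exists>!x. \<sigma> x * a + \<delta> x - b * x = 1) \<and>
            \<sigma> (rf_value \<sigma> \<delta> (spTminus b, spconst 1) a) * a + \<delta> (rf_value \<sigma> \<delta> (spTminus b, spconst 1) a)
              - b * rf_value \<sigma> \<delta> (spTminus b, spconst 1) a = 1)"
proof -
  interpret ore_extension \<sigma> \<delta> using assms by (rule ore_extension.intro)
  have eval: "speval \<sigma> \<delta> (spTminus b) = (\<lambda>c. c - b)" "speval \<sigma> \<delta> (spconst 1) = (\<lambda>_. 1)"
    by (simp_all add: fun_eq_iff speval_spTminus speval_spconst)
  have defined_iff: "rf_defined_at \<sigma> \<delta> (spTminus b, spconst 1) a
      \<longleftrightarrow> skew_invertible_on \<sigma> \<delta> (sd_class \<sigma> \<delta> a) (\<lambda>c. c - b)"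
    by (simp add: rf_defined_at_def min_rep_inverse_Tminus eval)
  have value_eq: "rf_value \<sigma> \<delta> (spTminus b, spconst 1) a = skew_inv \<sigma> \<delta> (sd_class \<sigma> \<delta> a) (\<lambda>c. c - b) a"
    by (simp add: rf_value_def min_rep_inverse_Tminus eval skew_prod_def sd_act_one)
  show ?thesis
  proof (intro conjI impI)
    show "rf_defined_at \<sigma> \<delta> (spTminus b, spconst 1) a \<longleftrightarrow>
        b \<notin> sd_class \<sigma> \<delta> a \<and> (\<forall>c\<in>sd_class \<sigma> \<delta> a. \<exists>x. \<sigma> x * c + \<delta> x - b * x = 1)"
      unfolding defined_iff by (rule skew_invertible_on_Tminus_iff)
  next
    assume "rf_defined_at \<sigma> \<delta> (spTminus b, spconst 1) a"
    then have inv: "skew_invertible_on \<sigma> \<delta> (sd_class \<sigma> \<delta> a) (\<lambda>c. c - b)"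
      and b: "b \<notin> sd_class \<sigma> \<delta> a"
      using defined_iff skew_invertible_on_Tminus_iff by blast+
    show "\<exists>!x. \<sigma> x * a + \<delta> x - b * x = 1"
      using skew_inv_Tminus_solution[OF inv] solution_unique[OF b] by blast
    show "\<sigma> (rf_value \<sigma> \<delta> (spTminus b, spconst 1) a) * a + \<delta> (rf_value \<sigma> \<delta> (spTminus b, spconst 1) a)
        - b * rf_value \<sigma> \<delta> (spTminus b, spconst 1) a = 1"
      unfolding value_eq by (rule skew_inv_Tminus_solution[OF inv])
  qed
qed

end
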